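(* Let $\mathbb{F}\in\{\mathbb{R},\mathbb{C}\}$, let $1\le l\le m$ be integers (with $m\ge2$), and let $\{e_j\}_{j=1}^m$ be an orthonormal basis of $\mathbb{F}^m$, with $E_{j,j'}=e_j\otimes e_{j'}^*$. Then the $2$-coherence tensors satisfy $$K_{2,l,m}=\Big(l-\frac{l(l-1)}{m-1}\Big)K_{2,1,m}+\frac{l(l-1)}{m(m-1)}\,I_m\otimes I_m,$$ and $$K_{2,1,m}=a\sum_{j=1}^mE_{j,j}\otimes E_{j,j}+\sum_{\substack{j,j'=1\\ j\neq j'}}^m\Big(b\,(E_{j,j'}\otimes E_{j',j}+E_{j,j}\otimes E_{j',j'})+c\,E_{j,j'}\otimes E_{j,j'}\Big),$$ where $a=\frac{d_{\mathbb{F}}(m)+(m-1)^2}{m^2d_{\mathbb{F}}(m)}$, and $b=c=a/3$ if $\mathbb{F}=\mathbb{R}$, while $b=a/2$, $c=0$ if $\mathbb{F}=\mathbb{C}$.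
   Context: Let $\mathcal{U}$ be the group of orthogonal (if $\mathbb{F}=\mathbb{R}$) or unitary (if $\mathbb{F}=\mathbb{C}$) $m\times m$ matrices with normalized Haar measure $\mu$. For a positive integer $t$, the $t$-coherence tensor is $K_{t,l,m}=\int_{\mathcal{U}}(UPU^* )^{\otimes t}\,d\mu(U)$, where $P$ is any rank-$l$ orthogonal projection on $\mathbb{F}^m$ and $^{\otimes t}$ denotes the $t$-fold Kronecker product (this does not depend on the choice of $P$). Also $d_{\mathbb{F}}(m)=\frac{(m+2)(m-1)}{2}$ if $\mathbb{F}=\mathbb{R}$ and $d_{\mathbb{F}}(m)=m^2-1$ if $\mathbb{F}=\mathbb{C}$. *)

theory Defs
  imports "HOL-Probability.Probability"
begin

text \<open>Matrices over F (F = real or complex) are indexed by a finite type 'n with CARD('n) = m.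
  The conjugation map cj is id for F = real and cnj for F = complex.\<close>

definition adj :: "('a \<Rightarrow> 'a) \<Rightarrow> 'a^'n^'m \<Rightarrow> 'a^'m^'n" where
  "adj cj A = (\<chi> i j. cj (A $ j $ i))"

definition kron :: "'a::times^'n^'m \<Rightarrow> 'a^'q^'p \<Rightarrow> 'a^('n \<times> 'q)^('m \<times> 'p)" where
  "kron A B = (\<chi> r s. A $ fst r $ fst s * B $ snd r $ snd s)"

definition unitary_grp :: "('a::semiring_1 \<Rightarrow> 'a) \<Rightarrow> ('a^'n^'n) set" where
  "unitary_grp cj = {U. U ** adj cj U = mat 1}"

text \<open>M is the normalized Haar measure: a left-invariant Borel probability measure
  concentrated on the group (unique).\<close>
definition haar_prob :: "('a::{real_normed_field,euclidean_space} \<Rightarrow> 'a) \<Rightarrow> ('a^'n^'n) measure \<Rightarrow> bool" where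
  "haar_prob cj M \<longleftrightarrow> sets M = sets borel \<and> prob_space M \<and>
     (AE U in M. U \<in> unitary_grp cj) \<and>
     (\<forall>V \<in> unitary_grp cj. distr M M (\<lambda>U. V ** U) = M)"

definition orth_proj :: "('a::semiring_1 \<Rightarrow> 'a) \<Rightarrow> 'a^'n^'n \<Rightarrow> bool" where
  "orth_proj cj P \<longleftrightarrow> P ** P = P \<and> adj cj P = P"

definition coh2 :: "('a::{real_normed_field,euclidean_space} \<Rightarrow> 'a) \<Rightarrow> ('a^'n^'n) measure \<Rightarrow> 'a^'n^'n
    \<Rightarrow> 'a^('n \<times> 'n)^('n \<times> 'n)" where
  "coh2 cj M P = integral\<^sup>L M (\<lambda>U. kron (U ** P ** adj cj U) (U ** P ** adj cj U))"

definition orthonormal_family :: "('a::semiring_1 \<Rightarrow> 'a) \<Rightarrow> ('n::finite \<Rightarrow> 'a^'n) \<Rightarrow> bool" where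
  "orthonormal_family cj e \<longleftrightarrow>
     (\<forall>j j'. (\<Sum>i\<in>UNIV. e j $ i * cj (e j' $ i)) = (if j = j' then 1 else 0))"

definition Eunit :: "('a::times \<Rightarrow> 'a) \<Rightarrow> ('n \<Rightarrow> 'a^'n) \<Rightarrow> 'n \<Rightarrow> 'n \<Rightarrow> 'a^'n^'n" where
  "Eunit cj e j j' = (\<chi> a b. e j $ a * cj (e j' $ b))"

definition dF_real :: "nat \<Rightarrow> real" where
  "dF_real m = (real m + 2) * (real m - 1) / 2"

definition dF_complex :: "nat \<Rightarrow> real" where
  "dF_complex m = (real m)^2 - 1"

end

theory Submission
  imports Defs
begin

text \<open>
  Write X_U = U P U^* with U Haar distributed. Left invariance of the Haar measure makes the
  fourth moments E[X_ij X_kl] invariant under conjugating X_U by any fixed unitary matrix.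
  Conjugating by diagonal sign changes kills every moment whose indices do not pair up;
  conjugating by transpositions shows that the remaining ones depend only on the pairing pattern,
  through B1 = E[X_pp X_qq], B2 = E[X_pq X_qp] and C = E[X_pq X_pq] for p \<noteq> q; and a rotation by
  45 degrees in the (p,q)-plane gives E[X_pp^2] = B1 + B2 + C. Over the reals X_U is symmetric, so
  C = B2; over the complex numbers conjugating by diag(i,1,...,1) gives C = 0. The identities
  tr X_U = l and X_U^2 = X_U yield m B1 + B2 + C = l^2/m and B1 + m B2 + C = l/m, which determine
  B1, B2 and C. So K_{2,l,m} is a combination of I \<otimes> I, the flip tensor and vec(I) vec(I)^T,
  which are the sums over j, j' of E_jj \<otimes> E_j'j', E_jj' \<otimes> E_j'j and (over the reals)
  E_jj' \<otimes> E_jj'.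
\<close>

section \<open>Conjugations and the unitary group\<close>

locale field_conj =
  fixes cj :: "'a::{real_normed_field,euclidean_space} \<Rightarrow> 'a"
  assumes cj_add: "cj (x + y) = cj x + cj y"
    and cj_mult: "cj (x * y) = cj x * cj y"
    and cj_cj [simp]: "cj (cj x) = x"
    and cj_of_real [simp]: "cj (of_real r) = of_real r"
    and continuous_on_cj: "continuous_on UNIV cj"
    and mult_cj_self: "x * cj x = of_real ((norm x)\<^sup>2)"
begin

lemma cj_0 [simp]: "cj 0 = 0"
  using cj_of_real[of 0] by simp

lemma cj_1 [simp]: "cj 1 = 1"
  using cj_of_real[of 1] by simp

lemma cj_minus: "cj (- x) = - cj x"
  using cj_add[of x "- x"] by (simp add: add_eq_0_iff2)

lemma cj_minus_1 [simp]: "cj (- 1) = - 1"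
  using cj_minus[of 1] by simp

lemma cj_sum: "cj (\<Sum>i\<in>S. f i) = (\<Sum>i\<in>S. cj (f i))"
  by (induction S rule: infinite_finite_induct) (auto simp: cj_add)

lemma continuous_on_cj_comp [continuous_intros]:
  "continuous_on S f \<Longrightarrow> continuous_on S (\<lambda>x. cj (f x))"
  using continuous_on_compose2[OF continuous_on_cj] by blast

lemma adj_mult: "adj cj (A ** B) = adj cj B ** adj cj A"
  by (simp add: vec_eq_iff adj_def matrix_matrix_mult_def cj_sum cj_mult mult.commute)

lemma adj_adj [simp]: "adj cj (adj cj A) = A"
  by (simp add: vec_eq_iff adj_def)

lemma adj_mult_unitary: "U \<in> unitary_grp cj \<Longrightarrow> adj cj U ** U = mat 1"
  unfolding unitary_grp_def using matrix_left_right_inverse by blast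

lemma continuous_on_conj_mat [continuous_intros]:
  "continuous_on S (\<lambda>U. U ** A ** adj cj (U :: 'a^'n^'n))"
  unfolding matrix_matrix_mult_def adj_def by (intro continuous_intros)

lemma norm_unitary_row:
  assumes "U \<in> unitary_grp cj"
  shows "norm (U $ i) = 1"
proof -
  have "(U ** adj cj U) $ i $ i = 1"
    using assms by (simp add: unitary_grp_def mat_def)
  then have "of_real (\<Sum>k\<in>UNIV. (norm (U $ i $ k))\<^sup>2) = (1::'a)"
    by (simp add: matrix_matrix_mult_def adj_def mult_cj_self)
  then have "(\<Sum>k\<in>UNIV. (norm (U $ i $ k))\<^sup>2) = 1"
    using of_real_eq_1_iff by blast
  then show ?thesis
    by (simp add: norm_vec_def L2_set_def)
qed

lemma compact_unitary_grp: "compact (unitary_grp cj :: ('a^'n^'n) set)"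
proof (unfold compact_eq_bounded_closed, intro conjI)
  have "norm U \<le> real CARD('n)" if "U \<in> unitary_grp cj" for U :: "'a^'n^'n"
  proof -
    have "norm U \<le> (\<Sum>i\<in>UNIV. norm (U $ i))"
      by (simp add: norm_vec_def L2_set_le_sum)
    then show ?thesis
      using norm_unitary_row[OF that] by simp
  qed
  then show "bounded (unitary_grp cj :: ('a^'n^'n) set)"
    by (rule boundedI)
  have "continuous_on UNIV (\<lambda>U::'a^'n^'n. U ** adj cj U)"
    unfolding matrix_matrix_mult_def adj_def by (intro continuous_intros)
  then show "closed (unitary_grp cj :: ('a^'n^'n) set)"
    unfolding unitary_grp_def by (intro closed_Collect_eq continuous_on_const)
qed

end

definition diag_mat :: "('n \<Rightarrow> 'a::semiring_1) \<Rightarrow> 'a^'n^'n" where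
  "diag_mat d = (\<chi> i j. if i = j then d i else 0)"

definition transposition_mat :: "'n \<Rightarrow> 'n \<Rightarrow> 'a::semiring_1^'n^'n" where
  "transposition_mat a b = (\<chi> i j. if j = Transposition.transpose a b i then 1 else 0)"

definition sqrt_half :: "'a::real_normed_field" where
  "sqrt_half = of_real (sqrt (1 / 2))"

definition rot45_mat :: "'n \<Rightarrow> 'n \<Rightarrow> 'a::real_normed_field^'n^'n" where
  "rot45_mat p q = (\<chi> i k.
     if i = p then (if k = p then sqrt_half else if k = q then - sqrt_half else 0)
     else if i = q then (if k = p then sqrt_half else if k = q then sqrt_half else 0)
     else if k = i then 1 else 0)"

lemma if_zero_mult: "(if P then x else 0) * y = (if P then x * y else (0::'a::mult_zero))"
  by simp

lemma mult_if_zero: "y * (if P then x else 0) = (if P then y * x else (0::'a::mult_zero))"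
  by simp

lemma sum_two_points:
  assumes "p \<noteq> q"
  shows "(\<Sum>k\<in>(UNIV::'n::finite set). if k = p then f k else if k = q then g k else 0)
     = f p + (g q :: 'a::comm_monoid_add)"
  using assms by (simp add: sum.If_cases Collect_disj_eq)

lemma sqrt_half_sq: "sqrt_half * sqrt_half = (1 / 2 :: 'a::real_normed_field)"
  by (simp add: sqrt_half_def flip: of_real_mult)

context field_conj
begin

lemma diag_mat_conj:
  "(diag_mat d ** A ** adj cj (diag_mat d)) $ i $ j = d i * A $ i $ j * cj (d j)"
  by (simp add: diag_mat_def adj_def matrix_matrix_mult_def if_zero_mult mult_if_zero
      if_distrib[of cj] cong: if_cong)

lemma diag_mat_unitary: "(\<And>i. d i * cj (d i) = 1) \<Longrightarrow> diag_mat d \<in> unitary_grp cj"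
  by (simp add: unitary_grp_def vec_eq_iff diag_mat_def adj_def matrix_matrix_mult_def mat_def
      if_zero_mult mult_if_zero if_distrib[of cj] cong: if_cong)

lemma transposition_mat_conj:
  "(transposition_mat a b ** A ** adj cj (transposition_mat a b)) $ i $ j
     = A $ Transposition.transpose a b i $ Transposition.transpose a b j"
  by (simp add: transposition_mat_def adj_def matrix_matrix_mult_def if_zero_mult mult_if_zero
      if_distrib[of cj] cong: if_cong)

lemma transposition_mat_unitary: "transposition_mat a b \<in> unitary_grp cj"
  by (simp add: unitary_grp_def vec_eq_iff transposition_mat_def adj_def matrix_matrix_mult_def mat_def
      if_zero_mult mult_if_zero if_distrib[of cj] inj_eq[OF inj_transpose] cong: if_cong)

lemma cj_sqrt_half [simp]: "cj sqrt_half = sqrt_half"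
  by (simp add: sqrt_half_def)

lemma rot45_mat_row:
  assumes "p \<noteq> q"
  shows "(rot45_mat p q ** B) $ p $ j = sqrt_half * (B $ p $ j - B $ q $ j)"
  using assms
  by (simp add: rot45_mat_def matrix_matrix_mult_def if_distrib[of "\<lambda>x. x * _"]
      if_distrib[of "\<lambda>x. _ * x"] sum_two_points algebra_simps cong: if_cong)

lemma rot45_mat_adj_col:
  assumes "p \<noteq> q"
  shows "(B ** adj cj (rot45_mat p q)) $ i $ p = sqrt_half * (B $ i $ p - B $ i $ q)"
  using assms
  by (simp add: rot45_mat_def adj_def matrix_matrix_mult_def if_distrib[of "\<lambda>x. _ * x"]
      if_distrib[of cj] cj_minus sum_two_points algebra_simps cong: if_cong)

lemma rot45_mat_conj_diag:
  assumes "p \<noteq> q"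
  shows "(rot45_mat p q ** A ** adj cj (rot45_mat p q)) $ p $ p = (A$p$p - A$p$q - A$q$p + A$q$q) / 2"
proof -
  have "(rot45_mat p q ** A ** adj cj (rot45_mat p q)) $ p $ p
      = sqrt_half * sqrt_half * (A$p$p - A$p$q - A$q$p + A$q$q)"
    using assms by (simp add: rot45_mat_adj_col rot45_mat_row algebra_simps)
  then show ?thesis
    by (simp add: sqrt_half_sq)
qed

lemma rot45_mat_unitary:
  assumes "p \<noteq> q"
  shows "rot45_mat p q \<in> unitary_grp cj"
proof -
  have "(rot45_mat p q ** adj cj (rot45_mat p q)) $ i $ j = mat 1 $ i $ j" for i j
    using assms
    by (cases "i = p"; cases "i = q"; cases "j = p"; cases "j = q")
       (simp_all add: rot45_mat_def adj_def matrix_matrix_mult_def mat_def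
        if_distrib[of "\<lambda>x. x * _"] if_distrib[of "\<lambda>x. _ * x"] if_distrib[of cj] cj_minus
        sum_two_points sqrt_half_sq cong: if_cong)
  then show ?thesis
    by (simp add: unitary_grp_def vec_eq_iff)
qed

end

lemma idempotent_fixes_rows:
  fixes P :: "'a::field^'n^'n"
  assumes "P ** P = P" and "b \<in> rows P"
  shows "(\<Sum>k\<in>UNIV. b $ k *s P $ k) = b"
proof -
  obtain i where bi: "b = P $ i"
    using assms(2) by (auto simp: rows_def row_def)
  have "(\<Sum>k\<in>UNIV. b $ k *s P $ k) = (P ** P) $ i"
    by (simp add: vec_eq_iff bi matrix_matrix_mult_def mult.commute)
  then show ?thesis
    using assms(1) bi by simp
qed

lemma trace_idempotent_eq_rank:
  fixes P :: "'a::field^'n^'n"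
  assumes idem: "P ** P = P"
  shows "trace P = of_nat (rank P)"
proof -
  obtain B where B: "B \<subseteq> rows P" "vec.independent B" "rows P \<subseteq> vec.span B"
    "card B = vec.dim (rows P)"
    using vec.basis_exists by blast
  have fin: "finite B"
    using B(2) vec.finiteI_independent by blast
  define R where "R = vec.representation B"
  have row_span: "P $ k \<in> vec.span B" for k
    using B(3) by (auto simp: rows_def row_def)
  have row_repr: "P $ k = (\<Sum>b\<in>B. R (P $ k) b *s b)" for k
    unfolding R_def using vec.sum_representation_eq[OF B(2) row_span fin, of k] by simp
  have coeff_sum: "(\<Sum>k\<in>UNIV. b $ k * R (P $ k) b) = 1" if "b \<in> B" for b
  proof -
    have "R b = R (\<Sum>k\<in>UNIV. b $ k *s P $ k)"
      using idempotent_fixes_rows[OF idem, of b] B(1) that by (metis subsetD)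
    also have "\<dots> = (\<lambda>c. \<Sum>k\<in>UNIV. b $ k * R (P $ k) c)"
      unfolding R_def
      by (subst vec.representation_sum[OF B(2)])
         (auto intro: vec.span_scale row_span simp: vec.representation_scale[OF B(2) row_span])
    finally have "R b b = (\<Sum>k\<in>UNIV. b $ k * R (P $ k) b)"
      by metis
    moreover have "R b b = 1"
      unfolding R_def using vec.representation_basis[OF B(2) that] by simp
    ultimately show ?thesis
      by simp
  qed
  have "trace P = (\<Sum>k\<in>UNIV. \<Sum>b\<in>B. R (P $ k) b * b $ k)"
    unfolding trace_def by (subst row_repr) (simp add: sum_component)
  also have "\<dots> = (\<Sum>b\<in>B. \<Sum>k\<in>UNIV. b $ k * R (P $ k) b)"
    by (subst sum.swap) (simp add: mult.commute)
  also have "\<dots> = of_nat (card B)"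
    using coeff_sum by simp
  finally show ?thesis
    using B(4) by (simp add: row_rank_def_gen)
qed

lemma transposition_invariant_const:
  assumes "\<And>a b i. h i = h (Transposition.transpose a b i)"
  shows "h i = h p"
  using assms[of i p i] by simp

lemma transposition_invariant_const_off_diag:
  assumes inv: "\<And>a b i j. g i j = g (Transposition.transpose a b i) (Transposition.transpose a b j)"
    and "i \<noteq> j" and "p \<noteq> q"
  shows "g i j = g p q"
proof -
  define j' where "j' = Transposition.transpose i p j"
  have "g i j = g p j'"
    using inv[of i j i p] by (simp add: j'_def transpose_commute)
  also have "\<dots> = g p q"
  proof -
    have "j' \<noteq> p"
      using \<open>i \<noteq> j\<close> by (auto simp: j'_def transpose_eq_iff)
    then show ?thesis
      using inv[of p j' q j'] \<open>p \<noteq> q\<close> by simp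
  qed
  finally show ?thesis .
qed

section \<open>The tensors spanning the coherence tensor\<close>

definition flip_tensor :: "'a::zero_neq_one^('n::finite \<times> 'n)^('n \<times> 'n)" where
  "flip_tensor = (\<chi> r s. of_bool (fst r = snd s \<and> fst s = snd r))"

definition vec_id_tensor :: "'a::zero_neq_one^('n::finite \<times> 'n)^('n \<times> 'n)" where
  "vec_id_tensor = (\<chi> r s. of_bool (fst r = snd r \<and> fst s = snd s))"

definition coh_lambda :: "nat \<Rightarrow> nat \<Rightarrow> real" where
  "coh_lambda m l = real l - real l * (real l - 1) / (real m - 1)"

definition coh_mu :: "nat \<Rightarrow> nat \<Rightarrow> real" where
  "coh_mu m l = real l * (real l - 1) / (real m * (real m - 1))"

definition coh2_rank_one :: "real \<Rightarrow> 'a::real_normed_algebra_1^('n::finite \<times> 'n)^('n \<times> 'n)" where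
  "coh2_rank_one \<kappa> = (1 / (real CARD('n) * (real CARD('n) + 1 + \<kappa>)))
     *\<^sub>R (kron (mat 1) (mat 1) + flip_tensor + \<kappa> *\<^sub>R vec_id_tensor)"

text \<open>
  \<kappa> is 1 for the reals and 0 for the complex numbers; it is the ratio
  E[X_pq X_pq] / E[X_pq X_qp] of the fourth moments (lemma moment_flip_index).
\<close>

definition (in field_conj) conj_index :: "real \<Rightarrow> bool" where
  "conj_index \<kappa> \<longleftrightarrow>
     (\<kappa> = 1 \<and> (\<forall>x. cj x = x)) \<or> (\<kappa> = 0 \<and> (\<exists>w. w * cj w = 1 \<and> w * w = -1))"

lemma kron_mat_1_entry:
  "(kron (mat 1) (mat 1) :: 'a::semiring_1^('n::finite \<times> 'n)^('n \<times> 'n)) $ r $ s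
     = of_bool (fst r = fst s \<and> snd r = snd s)"
  by (simp add: kron_def mat_def)

lemma moment_system_solution:
  fixes B1 B2 m t k :: "'a::field"
  assumes "m \<noteq> 0" "m - 1 \<noteq> 0" "m + 1 + k \<noteq> 0"
    and eq1: "m * B1 + B2 + k * B2 = t * (t / m)"
    and eq2: "B1 + m * B2 + k * B2 = t / m"
  shows "B2 = (t - t * (t - 1) / (m - 1)) / (m * (m + 1 + k))"
    and "B1 = B2 + t * (t - 1) / (m * (m - 1))"
proof -
  have "(m - 1) * (B1 - B2) = (m * B1 + B2 + k * B2) - (B1 + m * B2 + k * B2)"
    by (simp add: algebra_simps)
  also have "\<dots> = t * (t / m) - t / m"
    unfolding eq1 eq2 ..
  finally have "(m - 1) * (B1 - B2) = t * (t / m) - t / m" .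
  then show B1: "B1 = B2 + t * (t - 1) / (m * (m - 1))"
    using assms(1,2) by (simp add: field_simps)
  have "(m + 1 + k) * B2 = t / m - t * (t - 1) / (m * (m - 1))"
    using eq2 unfolding B1 by (simp add: algebra_simps)
  then have "B2 = (t / m - t * (t - 1) / (m * (m - 1))) / (m + 1 + k)"
    using assms(3) by (simp add: eq_divide_eq mult.commute)
  also have "\<dots> = (t - t * (t - 1) / (m - 1)) / (m * (m + 1 + k))"
    using assms(1,2) by (simp add: field_simps)
  finally show "B2 = (t - t * (t - 1) / (m - 1)) / (m * (m + 1 + k))" .
qed

lemma tensor_eq_coh2_rank_one_combination:
  fixes T :: "'a::real_normed_field^('n::finite \<times> 'n)^('n \<times> 'n)"
  assumes T: "\<And>r s. T $ r $ s = of_bool (fst r = fst s \<and> snd r = snd s) * of_real (lam * b + mu)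
        + of_bool (fst r = snd s \<and> fst s = snd r) * of_real (lam * b)
        + of_bool (fst r = snd r \<and> fst s = snd s) * of_real (\<kappa> * (lam * b))"
    and b: "b = 1 / (real CARD('n) * (real CARD('n) + 1 + \<kappa>))"
  shows "T = lam *\<^sub>R coh2_rank_one \<kappa> + mu *\<^sub>R kron (mat 1) (mat 1)"
proof -
  have "T $ r $ s = (lam *\<^sub>R coh2_rank_one \<kappa> + mu *\<^sub>R kron (mat 1) (mat 1)) $ r $ s" for r s
  proof -
    define \<delta>\<^sub>I \<delta>\<^sub>F \<delta>\<^sub>V :: 'a
      where "\<delta>\<^sub>I = of_bool (fst r = fst s \<and> snd r = snd s)"
        and "\<delta>\<^sub>F = of_bool (fst r = snd s \<and> fst s = snd r)"
        and "\<delta>\<^sub>V = of_bool (fst r = snd r \<and> fst s = snd s)"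
    have "(lam *\<^sub>R coh2_rank_one \<kappa> + mu *\<^sub>R kron (mat 1) (mat 1)) $ r $ s
        = of_real lam * (of_real b * (\<delta>\<^sub>I + \<delta>\<^sub>F + of_real \<kappa> * \<delta>\<^sub>V)) + of_real mu * \<delta>\<^sub>I"
      unfolding \<delta>\<^sub>I_def \<delta>\<^sub>F_def \<delta>\<^sub>V_def coh2_rank_one_def vector_add_component vector_scaleR_component
        flip_tensor_def vec_id_tensor_def vec_lambda_beta kron_mat_1_entry
      by (simp only: scaleR_conv_of_real b)
    moreover have "T $ r $ s = \<delta>\<^sub>I * of_real (lam * b + mu) + \<delta>\<^sub>F * of_real (lam * b)
        + \<delta>\<^sub>V * (of_real \<kappa> * of_real (lam * b))"
      unfolding T \<delta>\<^sub>I_def \<delta>\<^sub>F_def \<delta>\<^sub>V_def by simp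
    ultimately show ?thesis
      by (simp add: algebra_simps)
  qed
  then show ?thesis
    by (simp add: vec_eq_iff)
qed

section \<open>Moments of a Haar-random conjugate of a projection\<close>

locale haar_projection = field_conj cj
  for cj :: "'a::{real_normed_field,euclidean_space} \<Rightarrow> 'a" +
  fixes M :: "('a^'n^'n) measure" and P :: "'a^'n^'n"
  assumes haar: "haar_prob cj M" and proj: "orth_proj cj P"
begin

definition rot_proj :: "'a^'n^'n \<Rightarrow> 'a^'n^'n" where
  "rot_proj U = U ** P ** adj cj U"

definition moment :: "'n \<Rightarrow> 'n \<Rightarrow> 'n \<Rightarrow> 'n \<Rightarrow> 'a" where
  "moment i j k l = (\<integral>U. rot_proj U $ i $ j * rot_proj U $ k $ l \<partial>M)"

definition mean :: "'n \<Rightarrow> 'a" where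
  "mean i = (\<integral>U. rot_proj U $ i $ i \<partial>M)"

lemma prob_space_M: "prob_space M"
  using haar by (simp add: haar_prob_def)

lemma sets_M: "sets M = sets borel"
  using haar by (simp add: haar_prob_def)

lemma AE_unitary: "AE U in M. U \<in> unitary_grp cj"
  using haar by (simp add: haar_prob_def)

lemma P_idempotent: "P ** P = P"
  using proj by (simp add: orth_proj_def)

lemma adj_P: "adj cj P = P"
  using proj by (simp add: orth_proj_def)

lemma continuous_on_rot_proj [continuous_intros]: "continuous_on S rot_proj"
  unfolding rot_proj_def by (intro continuous_intros)

lemma borel_measurable_continuous:
  "continuous_on UNIV f \<Longrightarrow> f \<in> borel_measurable M"
  using measurable_cong_sets[OF sets_M refl] borel_measurable_continuous_onI by blast

lemma integrable_continuous:
  fixes f :: "'a^'n^'n \<Rightarrow> 'b::{banach,second_countable_topology}"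
  assumes f: "continuous_on UNIV f"
  shows "integrable M f"
proof -
  have "bounded (f ` unitary_grp cj)"
    using compact_continuous_image[OF continuous_on_subset[OF f subset_UNIV] compact_unitary_grp]
    by (rule compact_imp_bounded)
  then obtain B where B: "\<And>U. U \<in> unitary_grp cj \<Longrightarrow> norm (f U) \<le> B"
    unfolding bounded_iff by blast
  have "AE U in M. norm (f U) \<le> B"
    using AE_unitary by eventually_elim (rule B)
  then show ?thesis
    using prob_space_M borel_measurable_continuous[OF f]
    by (intro finite_measure.integrable_const_bound) (auto simp: prob_space_def)
qed

lemma integrable_rot_proj_entry [simp]: "integrable M (\<lambda>U. rot_proj U $ i $ j)"
  by (intro integrable_continuous continuous_intros)

lemma integrable_rot_proj_entry_mult [simp]:
  "integrable M (\<lambda>U. rot_proj U $ i $ j * rot_proj U $ k $ l)"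
  by (intro integrable_continuous continuous_intros)

lemma integral_cong_unitary:
  assumes "continuous_on UNIV f" "continuous_on UNIV g"
    and "\<And>U. U \<in> unitary_grp cj \<Longrightarrow> f U = g U"
  shows "(\<integral>U. f U \<partial>M) = (\<integral>U. g U \<partial>M)"
  using assms AE_unitary
  by (intro integral_cong_AE borel_measurable_continuous) (auto elim: AE_mp)

lemma coh2_entry: "coh2 cj M P $ r $ s = moment (fst r) (fst s) (snd r) (snd s)"
proof -
  have int: "integrable M (\<lambda>U. kron (rot_proj U) (rot_proj U))"
    unfolding kron_def by (intro integrable_continuous continuous_intros)
  have lin: "bounded_linear (\<lambda>A::'a^('n\<times>'n)^('n\<times>'n). A $ r $ s)"
    using bounded_linear_compose[OF bounded_linear_vec_nth bounded_linear_vec_nth] by blast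
  have "coh2 cj M P $ r $ s = (\<integral>U. kron (rot_proj U) (rot_proj U) $ r $ s \<partial>M)"
    unfolding coh2_def rot_proj_def[symmetric] using integral_bounded_linear[OF lin int] by simp
  then show ?thesis
    by (simp add: kron_def moment_def)
qed

lemma integral_rot_proj_unitary_conj:
  fixes g :: "'a^'n^'n \<Rightarrow> 'b::{banach,second_countable_topology}"
  assumes V: "V \<in> unitary_grp cj" and g: "continuous_on UNIV g"
  shows "(\<integral>U. g (V ** rot_proj U ** adj cj V) \<partial>M) = (\<integral>U. g (rot_proj U) \<partial>M)"
proof -
  have rot_proj_mult: "rot_proj (V ** U) = V ** rot_proj U ** adj cj V" for U
    by (simp add: rot_proj_def adj_mult matrix_mul_assoc)
  have "continuous_on UNIV (\<lambda>U::'a^'n^'n. V ** U)"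
    unfolding matrix_matrix_mult_def by (intro continuous_intros)
  then have "(\<lambda>U. V ** U) \<in> measurable M M"
    using measurable_cong_sets[OF sets_M sets_M] borel_measurable_continuous_onI by blast
  then have "integral\<^sup>L (distr M M (\<lambda>U. V ** U)) (\<lambda>U. g (rot_proj U))
      = (\<integral>U. g (rot_proj (V ** U)) \<partial>M)"
    by (intro integral_distr borel_measurable_continuous continuous_on_compose2[OF g continuous_on_rot_proj]) auto
  moreover have "distr M M (\<lambda>U. V ** U) = M"
    using haar V by (simp add: haar_prob_def)
  ultimately show ?thesis
    by (simp add: rot_proj_mult)
qed

lemma moment_unitary_conj:
  assumes "V \<in> unitary_grp cj"
  shows "moment i j k l
    = (\<integral>U. (V ** rot_proj U ** adj cj V) $ i $ j * (V ** rot_proj U ** adj cj V) $ k $ l \<partial>M)"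
  unfolding moment_def
  by (rule integral_rot_proj_unitary_conj[OF assms, symmetric]) (intro continuous_intros)

lemma moment_diag_conj:
  assumes "\<And>x. d x * cj (d x) = 1"
  shows "moment i j k l = d i * cj (d j) * d k * cj (d l) * moment i j k l"
proof -
  have "moment i j k l
      = (\<integral>U. (diag_mat d ** rot_proj U ** adj cj (diag_mat d)) $ i $ j
              * (diag_mat d ** rot_proj U ** adj cj (diag_mat d)) $ k $ l \<partial>M)"
    by (rule moment_unitary_conj[OF diag_mat_unitary[OF assms]])
  also have "\<dots>
      = (\<integral>U. d i * cj (d j) * d k * cj (d l) * (rot_proj U $ i $ j * rot_proj U $ k $ l) \<partial>M)"
    by (simp add: diag_mat_conj mult_ac)
  also have "\<dots> = d i * cj (d j) * d k * cj (d l) * moment i j k l"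
    unfolding moment_def by (rule integral_mult_right_zero)
  finally show ?thesis .
qed

lemma moment_eq_0_unpaired:
  assumes "\<not> (i = j \<and> k = l)" "\<not> (i = l \<and> j = k)" "\<not> (i = k \<and> j = l)"
  shows "moment i j k l = 0"
proof -
  define \<sigma> :: "'n \<Rightarrow> 'n \<Rightarrow> 'a" where "\<sigma> p x = (if x = p then -1 else 1)" for p x
  have cj_\<sigma>: "cj (\<sigma> p x) = \<sigma> p x" for p x
    by (simp add: \<sigma>_def)
  have "\<sigma> p x * cj (\<sigma> p x) = 1" for p x
    by (simp add: cj_\<sigma> \<sigma>_def)
  then have flip: "moment i j k l = \<sigma> p i * \<sigma> p j * \<sigma> p k * \<sigma> p l * moment i j k l" for p
    using moment_diag_conj[of "\<sigma> p"] by (simp add: cj_\<sigma>)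
  have "\<sigma> i i * \<sigma> i j * \<sigma> i k * \<sigma> i l = -1 \<or> \<sigma> j i * \<sigma> j j * \<sigma> j k * \<sigma> j l = -1
      \<or> \<sigma> k i * \<sigma> k j * \<sigma> k k * \<sigma> k l = -1"
    using assms by (auto simp: \<sigma>_def)
  then obtain p where "\<sigma> p i * \<sigma> p j * \<sigma> p k * \<sigma> p l = -1"
    by blast
  then show ?thesis
    using flip[of p] by simp
qed

lemma moment_transposition:
  "moment i j k l = moment (Transposition.transpose a b i) (Transposition.transpose a b j)
                           (Transposition.transpose a b k) (Transposition.transpose a b l)"
  unfolding moment_unitary_conj[OF transposition_mat_unitary, of i j k l a b] transposition_mat_conj
  by (simp add: moment_def)

lemma mean_transposition: "mean i = mean (Transposition.transpose a b i)"
proof -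
  have "mean i = (\<integral>U. (transposition_mat a b ** rot_proj U ** adj cj (transposition_mat a b)) $ i $ i \<partial>M)"
    unfolding mean_def
    by (rule integral_rot_proj_unitary_conj[OF transposition_mat_unitary, symmetric]) (intro continuous_intros)
  then show ?thesis
    by (simp add: transposition_mat_conj mean_def)
qed

lemma moment_diag_const: "moment i i i i = moment p p p p"
  by (rule transposition_invariant_const[where h = "\<lambda>i. moment i i i i"]) (rule moment_transposition)

lemma moment_pair_consts:
  assumes "i \<noteq> j" "p \<noteq> q"
  shows "moment i i j j = moment p p q q"
    and "moment i j j i = moment p q q p"
    and "moment i j i j = moment p q p q"
  using assms
  by (auto intro!: transposition_invariant_const_off_diag[where g = "\<lambda>i j. moment i i j j"]
      transposition_invariant_const_off_diag[where g = "\<lambda>i j. moment i j j i"]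
      transposition_invariant_const_off_diag[where g = "\<lambda>i j. moment i j i j"] moment_transposition)

lemma moment_rot45:
  assumes pq: "p \<noteq> q"
  shows "moment p p p p = moment p p q q + moment p q q p + moment p q p q"
proof -
  let ?x = "\<lambda>U. rot_proj U $ p $ p - rot_proj U $ p $ q - rot_proj U $ q $ p + rot_proj U $ q $ q"
  have "moment p p p p = (\<integral>U. ?x U * ?x U / 4 \<partial>M)"
    unfolding moment_unitary_conj[OF rot45_mat_unitary[OF pq]] rot45_mat_conj_diag[OF pq]
    by (simp add: field_simps)
  also have "\<dots> = (moment p p p p + moment p p q q + moment p q q p + moment p q p q) / 2"
    using pq pq[symmetric]
    by (simp add: algebra_simps moment_def[symmetric] moment_eq_0_unpaired moment_diag_const[of q p]
        moment_pair_consts[of q p p q])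
  finally show ?thesis
    by (simp add: field_simps)
qed

lemma rot_proj_idempotent:
  assumes "U \<in> unitary_grp cj"
  shows "rot_proj U ** rot_proj U = rot_proj U"
proof -
  have "rot_proj U ** rot_proj U = U ** (P ** (adj cj U ** U) ** P) ** adj cj U"
    by (simp add: rot_proj_def matrix_mul_assoc)
  also have "\<dots> = rot_proj U"
    by (simp add: adj_mult_unitary[OF assms] P_idempotent rot_proj_def)
  finally show ?thesis .
qed

lemma trace_rot_proj:
  assumes "U \<in> unitary_grp cj"
  shows "trace (rot_proj U) = of_nat (rank P)"
proof -
  have "trace (rot_proj U) = trace (adj cj U ** (U ** P))"
    unfolding rot_proj_def by (rule trace_mul_sym)
  also have "\<dots> = trace P"
    by (simp add: matrix_mul_assoc adj_mult_unitary[OF assms])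
  finally show ?thesis
    using trace_idempotent_eq_rank[OF P_idempotent] by simp
qed

lemma adj_rot_proj: "adj cj (rot_proj U) = rot_proj U"
  by (simp add: rot_proj_def adj_mult adj_P matrix_mul_assoc)

lemma sum_mean: "(\<Sum>i\<in>UNIV. mean i) = of_nat (rank P)"
proof -
  have "(\<Sum>i\<in>UNIV. mean i) = (\<integral>U. (\<Sum>i\<in>UNIV. rot_proj U $ i $ i) \<partial>M)"
    by (simp add: mean_def)
  also have "\<dots> = (\<integral>U. of_nat (rank P) \<partial>M)"
    using trace_rot_proj by (intro integral_cong_unitary continuous_intros) (simp_all add: trace_def)
  also have "\<dots> = of_nat (rank P)"
    using prob_space.prob_space[OF prob_space_M] by simp
  finally show ?thesis .
qed

lemma mean_eq: "mean i = of_nat (rank P) / of_nat CARD('n)"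
proof -
  have "mean j = mean i" for j
    by (rule transposition_invariant_const[where h = mean]) (rule mean_transposition)
  then have "(\<Sum>j\<in>UNIV. mean j) = of_nat CARD('n) * mean i"
    by (metis (no_types) sum_constant sum.cong)
  then show ?thesis
    using sum_mean by (simp add: eq_divide_eq mult.commute)
qed

lemma sum_moment_trace: "(\<Sum>s\<in>UNIV. moment r r s s) = of_nat (rank P) * mean r"
proof -
  have "(\<Sum>s\<in>UNIV. moment r r s s)
      = (\<integral>U. rot_proj U $ r $ r * (\<Sum>s\<in>UNIV. rot_proj U $ s $ s) \<partial>M)"
    by (simp add: moment_def sum_distrib_left)
  also have "\<dots> = (\<integral>U. of_nat (rank P) * rot_proj U $ r $ r \<partial>M)"
    using trace_rot_proj by (intro integral_cong_unitary continuous_intros) (simp_all add: trace_def)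
  also have "\<dots> = of_nat (rank P) * mean r"
    unfolding mean_def by (rule integral_mult_right_zero)
  finally show ?thesis .
qed

lemma sum_moment_square: "(\<Sum>s\<in>UNIV. moment r s s r) = mean r"
proof -
  have "(\<Sum>s\<in>UNIV. moment r s s r)
      = (\<integral>U. (\<Sum>s\<in>UNIV. rot_proj U $ r $ s * rot_proj U $ s $ r) \<partial>M)"
    by (simp add: moment_def)
  also have "\<dots> = mean r"
    unfolding mean_def using rot_proj_idempotent
    by (intro integral_cong_unitary continuous_intros) (simp_all add: matrix_matrix_mult_def vec_eq_iff)
  finally show ?thesis .
qed

lemma moment_flip_real:
  assumes "\<And>x. cj x = x"
  shows "moment i j i j = moment i j j i"
proof -
  have "rot_proj U $ j $ i = rot_proj U $ i $ j" for U
    using arg_cong[OF adj_rot_proj, of "\<lambda>A. A $ i $ j"] by (simp add: adj_def assms)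
  then show ?thesis
    by (simp add: moment_def)
qed

lemma moment_flip_complex:
  assumes "w * cj w = 1" "w * w = -1" and "p \<noteq> q"
  shows "moment p q p q = 0"
proof -
  define d where "d x = (if x = p then w else 1)" for x
  have "d x * cj (d x) = 1" for x
    using assms by (simp add: d_def)
  then have "moment p q p q = w * w * moment p q p q"
    using moment_diag_conj[of d p q p q] \<open>p \<noteq> q\<close> by (simp add: d_def mult_ac)
  then show ?thesis
    using assms by simp
qed

lemma moment_pattern:
  assumes pq: "p \<noteq> q"
  shows "moment i j k l = of_bool (i = j \<and> k = l) * moment p p q q
     + of_bool (i = l \<and> j = k) * moment p q q p + of_bool (i = k \<and> j = l) * moment p q p q"
proof -
  consider (diag) "i = j" "j = k" "k = l" | (B1) "i = j" "k = l" "i \<noteq> k"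
    | (B2) "i = l" "j = k" "i \<noteq> j" | (C) "i = k" "j = l" "i \<noteq> j"
    | (unpaired) "\<not> (i = j \<and> k = l)" "\<not> (i = l \<and> j = k)" "\<not> (i = k \<and> j = l)"
    by blast
  then show ?thesis
  proof cases
    case diag
    then show ?thesis
      using moment_diag_const[of i p] moment_rot45[OF pq] by simp
  next
    case B1
    then show ?thesis
      using moment_pair_consts(1)[OF \<open>i \<noteq> k\<close> pq] by simp
  next
    case B2
    then show ?thesis
      using moment_pair_consts(2)[OF \<open>i \<noteq> j\<close> pq] by simp
  next
    case C
    then show ?thesis
      using moment_pair_consts(3)[OF \<open>i \<noteq> j\<close> pq] by simp
  next
    case unpaired
    then show ?thesis
      by (simp only: moment_eq_0_unpaired[OF unpaired] of_bool_eq(1) simp_thms mult_zero_left add_0)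
  qed
qed

lemma moment_flip_index:
  assumes "conj_index \<kappa>" "p \<noteq> q"
  shows "moment p q p q = of_real \<kappa> * moment p q q p"
  using assms moment_flip_real moment_flip_complex unfolding conj_index_def by auto

lemma moment_pair_values:
  assumes pq: "p \<noteq> q" and \<kappa>: "conj_index \<kappa>"
    and b: "b = 1 / (real CARD('n) * (real CARD('n) + 1 + \<kappa>))"
  shows "moment p q q p = of_real (coh_lambda CARD('n) (rank P) * b)"
    and "moment p p q q = of_real (coh_lambda CARD('n) (rank P) * b + coh_mu CARD('n) (rank P))"
proof -
  define m :: real where "m = real CARD('n)"
  define t :: real where "t = real (rank P)"
  define B1 B2 C where "B1 = moment p p q q" and "B2 = moment p q q p" and "C = moment p q p q"
  have pattern: "moment i j k l = of_bool (i = j \<and> k = l) * B1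
     + of_bool (i = l \<and> j = k) * B2 + of_bool (i = k \<and> j = l) * C" for i j k l
    unfolding B1_def B2_def C_def by (rule moment_pattern[OF pq])
  have C_B2: "C = of_real \<kappa> * B2"
    unfolding B2_def C_def by (rule moment_flip_index[OF \<kappa> pq])
  have "card {p, q} \<le> CARD('n)"
    by (rule card_mono) auto
  then have "m \<ge> 2"
    using pq by (simp add: m_def)
  moreover have "\<kappa> \<ge> 0"
    using \<kappa> by (auto simp: conj_index_def)
  ultimately have "m \<noteq> 0" "m - 1 \<noteq> 0" "m + 1 + \<kappa> \<noteq> 0"
    by auto
  then have nz: "(of_real m :: 'a) \<noteq> 0" "(of_real m - 1 :: 'a) \<noteq> 0"
    "(of_real m + 1 + of_real \<kappa> :: 'a) \<noteq> 0"
    by (metis of_real_eq_0_iff of_real_1 of_real_diff of_real_add)+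
  have "(\<Sum>s\<in>UNIV. moment p p s s) = of_real m * B1 + B2 + C"
    by (simp add: pattern sum.distrib m_def)
  then have eq1: "of_real m * B1 + B2 + of_real \<kappa> * B2 = of_real t * (of_real t / of_real m)"
    using sum_moment_trace[of p] mean_eq by (simp add: C_B2 m_def t_def)
  have "(\<Sum>s\<in>UNIV. moment p s s p) = B1 + of_real m * B2 + C"
    by (simp add: pattern sum.distrib m_def eq_commute[of _ p])
  then have eq2: "B1 + of_real m * B2 + of_real \<kappa> * B2 = of_real t / of_real m"
    using sum_moment_square[of p] mean_eq by (simp add: C_B2 m_def t_def)
  note sol = moment_system_solution[OF nz eq1 eq2]
  have B2: "B2 = of_real (coh_lambda CARD('n) (rank P) * b)"
    using sol(1) by (simp add: coh_lambda_def b m_def t_def)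
  then show "moment p q q p = of_real (coh_lambda CARD('n) (rank P) * b)"
    by (simp only: B2_def)
  show "moment p p q q = of_real (coh_lambda CARD('n) (rank P) * b + coh_mu CARD('n) (rank P))"
    using sol(2) by (simp add: B1_def[symmetric] B2 coh_mu_def m_def t_def)
qed

lemma coh2_closed_form:
  assumes m2: "CARD('n) \<ge> 2" and \<kappa>: "conj_index \<kappa>"
  shows "coh2 cj M P = coh_lambda CARD('n) (rank P) *\<^sub>R coh2_rank_one \<kappa>
                       + coh_mu CARD('n) (rank P) *\<^sub>R kron (mat 1) (mat 1)"
proof -
  have "\<not> CARD('n) \<le> Suc 0"
    using m2 by simp
  then obtain p q :: 'n where pq: "p \<noteq> q"
    by (auto simp: card_le_Suc0_iff_eq)
  define lam mu b
    where "lam = coh_lambda CARD('n) (rank P)" and "mu = coh_mu CARD('n) (rank P)"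
      and "b = 1 / (real CARD('n) * (real CARD('n) + 1 + \<kappa>))"
  note pair_moments = moment_pair_values[OF pq \<kappa> b_def, folded lam_def mu_def]
  have "moment i j k l = of_bool (i = j \<and> k = l) * of_real (lam * b + mu)
      + of_bool (i = l \<and> j = k) * of_real (lam * b) + of_bool (i = k \<and> j = l) * of_real (\<kappa> * (lam * b))"
    for i j k l
    using moment_pattern[OF pq, of i j k l]
    by (simp only: moment_flip_index[OF \<kappa> pq] pair_moments of_real_mult)
  then have "coh2 cj M P $ r $ s = of_bool (fst r = fst s \<and> snd r = snd s) * of_real (lam * b + mu)
      + of_bool (fst r = snd s \<and> fst s = snd r) * of_real (lam * b)
      + of_bool (fst r = snd r \<and> fst s = snd s) * of_real (\<kappa> * (lam * b))" for r s
    by (simp only: coh2_entry)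
  then show ?thesis
    unfolding lam_def[symmetric] mu_def[symmetric] by (rule tensor_eq_coh2_rank_one_combination[OF _ b_def])
qed

end

section \<open>Orthonormal bases and the real and complex cases\<close>

lemma sum_diag_plus_off_diag:
  fixes F :: "'n::finite \<Rightarrow> 'n \<Rightarrow> 'v::ab_group_add"
  shows "(\<Sum>j\<in>UNIV. F j j) + (\<Sum>j\<in>UNIV. \<Sum>j'\<in>UNIV - {j}. F j j')
    = (\<Sum>j\<in>UNIV. \<Sum>j'\<in>UNIV. F j j')"
  by (simp add: sum_diff1 sum_subtractf)

lemma kron_sum_entry:
  "(\<Sum>j\<in>UNIV. \<Sum>j'\<in>UNIV. kron (A j j') (B j j')) $ r $ s
     = (\<Sum>j\<in>UNIV. \<Sum>j'\<in>UNIV. A j j' $ fst r $ fst s * B j j' $ snd r $ snd s)"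
  by (simp add: kron_def)

context field_conj
begin

lemma orthonormal_family_complete:
  fixes e :: "'n::finite \<Rightarrow> 'a^'n"
  assumes "orthonormal_family cj e"
  shows "(\<Sum>j\<in>UNIV. e j $ a * cj (e j $ b)) = of_bool (a = b)"
proof -
  define E :: "'a^'n^'n" where "E = (\<chi> j i. e j $ i)"
  have "E ** adj cj E = mat 1"
    using assms by (simp add: vec_eq_iff E_def matrix_matrix_mult_def adj_def orthonormal_family_def mat_def)
  then have "adj cj E ** E = mat 1"
    using matrix_left_right_inverse by blast
  then have "(adj cj E ** E) $ b $ a = of_bool (a = b)"
    by (simp add: mat_def)
  then show ?thesis
    by (simp add: E_def matrix_matrix_mult_def adj_def mult.commute)
qed

lemma sum_kron_Eunit_id:
  fixes e :: "'n::finite \<Rightarrow> 'a^'n"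
  assumes "orthonormal_family cj e"
  shows "(\<Sum>j\<in>UNIV. \<Sum>j'\<in>UNIV. kron (Eunit cj e j j) (Eunit cj e j' j')) = kron (mat 1) (mat 1)"
proof -
  have "(\<Sum>j\<in>UNIV. \<Sum>j'\<in>UNIV. kron (Eunit cj e j j) (Eunit cj e j' j')) $ r $ s
      = kron (mat 1) (mat 1) $ r $ s"
    for r s :: "'n \<times> 'n"
  proof -
    have "(\<Sum>j\<in>UNIV. \<Sum>j'\<in>UNIV. kron (Eunit cj e j j) (Eunit cj e j' j')) $ r $ s
        = (\<Sum>j\<in>UNIV. e j $ fst r * cj (e j $ fst s)) * (\<Sum>j'\<in>UNIV. e j' $ snd r * cj (e j' $ snd s))"
      unfolding kron_sum_entry by (simp add: Eunit_def sum_product mult_ac)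
    then show ?thesis
      by (simp add: kron_def mat_def orthonormal_family_complete[OF assms])
  qed
  then show ?thesis
    by (simp add: vec_eq_iff)
qed

lemma sum_kron_Eunit_flip:
  fixes e :: "'n::finite \<Rightarrow> 'a^'n"
  assumes "orthonormal_family cj e"
  shows "(\<Sum>j\<in>UNIV. \<Sum>j'\<in>UNIV. kron (Eunit cj e j j') (Eunit cj e j' j)) = flip_tensor"
proof -
  have "(\<Sum>j\<in>UNIV. \<Sum>j'\<in>UNIV. kron (Eunit cj e j j') (Eunit cj e j' j)) $ r $ s = flip_tensor $ r $ s"
    for r s :: "'n \<times> 'n"
  proof -
    have "(\<Sum>j\<in>UNIV. \<Sum>j'\<in>UNIV. kron (Eunit cj e j j') (Eunit cj e j' j)) $ r $ s
        = (\<Sum>j\<in>UNIV. e j $ fst r * cj (e j $ snd s)) * (\<Sum>j'\<in>UNIV. e j' $ snd r * cj (e j' $ fst s))"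
      unfolding kron_sum_entry by (simp add: Eunit_def sum_product mult_ac)
    then show ?thesis
      by (auto simp: flip_tensor_def orthonormal_family_complete[OF assms])
  qed
  then show ?thesis
    by (simp add: vec_eq_iff)
qed

lemma sum_kron_Eunit_vec_id:
  fixes e :: "'n::finite \<Rightarrow> 'a^'n"
  assumes "orthonormal_family cj e" and "\<And>x. cj x = x"
  shows "(\<Sum>j\<in>UNIV. \<Sum>j'\<in>UNIV. kron (Eunit cj e j j') (Eunit cj e j j')) = vec_id_tensor"
proof -
  have "(\<Sum>j\<in>UNIV. \<Sum>j'\<in>UNIV. kron (Eunit cj e j j') (Eunit cj e j j')) $ r $ s = vec_id_tensor $ r $ s"
    for r s :: "'n \<times> 'n"
  proof -
    have "(\<Sum>j\<in>UNIV. \<Sum>j'\<in>UNIV. kron (Eunit cj e j j') (Eunit cj e j j')) $ r $ s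
        = (\<Sum>j\<in>UNIV. e j $ fst r * cj (e j $ snd r)) * (\<Sum>j'\<in>UNIV. e j' $ fst s * cj (e j' $ snd s))"
      unfolding kron_sum_entry by (simp add: Eunit_def sum_product assms(2) mult_ac)
    then show ?thesis
      by (auto simp: vec_id_tensor_def orthonormal_family_complete[OF assms(1)])
  qed
  then show ?thesis
    by (simp add: vec_eq_iff)
qed

lemma coh2_rank_one_Eunit:
  fixes e :: "'n::finite \<Rightarrow> 'a^'n"
  assumes onb: "orthonormal_family cj e" and \<kappa>: "conj_index \<kappa>"
    and b: "b = 1 / (real CARD('n) * (real CARD('n) + 1 + \<kappa>))"
    and c: "c = \<kappa> * b" and a: "a = 2 * b + c"
  shows "coh2_rank_one \<kappa> = a *\<^sub>R (\<Sum>j\<in>UNIV. kron (Eunit cj e j j) (Eunit cj e j j))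
          + (\<Sum>j\<in>UNIV. \<Sum>j'\<in>UNIV - {j}.
               b *\<^sub>R (kron (Eunit cj e j j') (Eunit cj e j' j) + kron (Eunit cj e j j) (Eunit cj e j' j'))
               + c *\<^sub>R kron (Eunit cj e j j') (Eunit cj e j j'))"
    (is "_ = ?target")
proof -
  have diag: "b *\<^sub>R (kron (Eunit cj e j j) (Eunit cj e j j) + kron (Eunit cj e j j) (Eunit cj e j j))
      + c *\<^sub>R kron (Eunit cj e j j) (Eunit cj e j j) = a *\<^sub>R kron (Eunit cj e j j) (Eunit cj e j j)" for j
    unfolding a by (simp add: scaleR_add_left mult.commute flip: scaleR_2)
  have "?target = (\<Sum>j\<in>UNIV. \<Sum>j'\<in>UNIV.
               b *\<^sub>R (kron (Eunit cj e j j') (Eunit cj e j' j) + kron (Eunit cj e j j) (Eunit cj e j' j'))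
               + c *\<^sub>R kron (Eunit cj e j j') (Eunit cj e j j'))"
    unfolding sum_diag_plus_off_diag[symmetric] diag scaleR_sum_right ..
  also have "\<dots> = b *\<^sub>R ((\<Sum>j\<in>UNIV. \<Sum>j'\<in>UNIV. kron (Eunit cj e j j') (Eunit cj e j' j))
        + (\<Sum>j\<in>UNIV. \<Sum>j'\<in>UNIV. kron (Eunit cj e j j) (Eunit cj e j' j')))
      + c *\<^sub>R (\<Sum>j\<in>UNIV. \<Sum>j'\<in>UNIV. kron (Eunit cj e j j') (Eunit cj e j j'))"
    by (simp only: sum.distrib scaleR_sum_right scaleR_add_right)
  also have "\<dots> = b *\<^sub>R (flip_tensor + kron (mat 1) (mat 1))
      + c *\<^sub>R (\<Sum>j\<in>UNIV. \<Sum>j'\<in>UNIV. kron (Eunit cj e j j') (Eunit cj e j j'))"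
    by (simp only: sum_kron_Eunit_id[OF onb] sum_kron_Eunit_flip[OF onb])
  also have "\<dots> = coh2_rank_one \<kappa>"
    using \<kappa> unfolding conj_index_def
  proof (elim disjE conjE)
    assume "\<kappa> = 1" "\<forall>x. cj x = x"
    then show ?thesis
      by (simp add: coh2_rank_one_def b c sum_kron_Eunit_vec_id[OF onb] scaleR_add_right add_ac)
  next
    assume "\<kappa> = 0"
    then show ?thesis
      by (simp add: coh2_rank_one_def b c add.commute)
  qed
  finally show ?thesis ..
qed

lemma coherence_tensor_formulas:
  fixes M :: "('a^'n::finite^'n) measure" and P P1 :: "'a^'n^'n" and e :: "'n \<Rightarrow> 'a^'n"
  assumes m2: "CARD('n) \<ge> 2" and \<kappa>: "conj_index \<kappa>"
    and b: "b = 1 / (real CARD('n) * (real CARD('n) + 1 + \<kappa>))"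
    and ab: "b = a / (2 + \<kappa>)" and c: "c = \<kappa> * b"
    and haar: "haar_prob cj M" and P: "orth_proj cj P" "rank P = l"
    and P1: "orth_proj cj P1" "rank P1 = 1" and onb: "orthonormal_family cj e"
  shows "coh2 cj M P = (real l - real l * (real l - 1) / (real CARD('n) - 1)) *\<^sub>R coh2 cj M P1
                      + (real l * (real l - 1) / (real CARD('n) * (real CARD('n) - 1))) *\<^sub>R kron (mat 1) (mat 1)
      \<and> coh2 cj M P1 = a *\<^sub>R (\<Sum>j\<in>UNIV. kron (Eunit cj e j j) (Eunit cj e j j))
          + (\<Sum>j\<in>UNIV. \<Sum>j'\<in>UNIV - {j}.
               b *\<^sub>R (kron (Eunit cj e j j') (Eunit cj e j' j) + kron (Eunit cj e j j) (Eunit cj e j' j'))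
               + c *\<^sub>R kron (Eunit cj e j j') (Eunit cj e j j'))"
proof -
  interpret proj_P: haar_projection cj M P
    by unfold_locales (fact haar P)+
  interpret proj_P1: haar_projection cj M P1
    by unfold_locales (fact haar P1)+
  have "\<kappa> \<ge> 0"
    using \<kappa> by (auto simp: conj_index_def)
  then have "a = 2 * b + c"
    using ab c by (simp add: field_simps)
  note K1_Eunit = coh2_rank_one_Eunit[OF onb \<kappa> b c this]
  have K1: "coh2 cj M P1 = coh2_rank_one \<kappa>"
    using proj_P1.coh2_closed_form[OF m2 \<kappa>] P1 by (simp add: coh_lambda_def coh_mu_def)
  show ?thesis
    using proj_P.coh2_closed_form[OF m2 \<kappa>] K1_Eunit P
    by (simp add: K1 coh_lambda_def coh_mu_def)
qed

end

interpretation real_conj: field_conj "id :: real \<Rightarrow> real"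
  by unfold_locales (auto simp: power2_eq_square)

interpretation complex_conj: field_conj cnj
  by unfold_locales (auto intro: continuous_intros simp del: of_real_power simp: complex_norm_square)

lemma real_conj_index: "real_conj.conj_index 1"
  by (simp add: real_conj.conj_index_def)

lemma complex_conj_index: "complex_conj.conj_index 0"
  unfolding complex_conj.conj_index_def by (intro disjI2 conjI exI[of _ \<i>]) simp_all

lemma dF_real_coeff:
  assumes "m \<ge> 2"
  shows "(dF_real m + (real m - 1)\<^sup>2) / ((real m)\<^sup>2 * dF_real m) / 3
    = 1 / (real m * (real m + 1 + 1))"
  using assms by (simp add: dF_real_def power2_eq_square divide_simps) (simp add: algebra_simps)

lemma dF_complex_coeff:
  assumes "m \<ge> 2"
  shows "(dF_complex m + (real m - 1)\<^sup>2) / ((real m)\<^sup>2 * dF_complex m) / 2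
    = 1 / (real m * (real m + 1 + 0))"
proof -
  have "real m * real m \<ge> 2 * 2"
    using assms by (intro mult_mono) auto
  then show ?thesis
    using assms by (simp add: dF_complex_def power2_eq_square divide_simps) (simp add: algebra_simps)
qed

theorem proposition2p10:
  fixes l :: nat
  assumes m2: "CARD('n::finite) \<ge> 2"
  shows
  "(\<forall>(M :: (real^'n^'n) measure) (P :: real^'n^'n) (P1 :: real^'n^'n) (e :: 'n \<Rightarrow> real^'n).
      haar_prob id M \<and> orth_proj id P \<and> rank P = l \<and> 1 \<le> l \<and>
      orth_proj id P1 \<and> rank P1 = 1 \<and> orthonormal_family id e \<longrightarrow>
      (let m = CARD('n); a = (dF_real m + (real m - 1)^2) / ((real m)^2 * dF_real m);
           b = a / 3; c = a / 3 in
        coh2 id M P = (real l - real l * (real l - 1) / (real m - 1)) *\<^sub>R coh2 id M P1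
                      + (real l * (real l - 1) / (real m * (real m - 1))) *\<^sub>R kron (mat 1) (mat 1)
      \<and> coh2 id M P1 = a *\<^sub>R (\<Sum>j\<in>UNIV. kron (Eunit id e j j) (Eunit id e j j))
          + (\<Sum>j\<in>UNIV. \<Sum>j'\<in>UNIV - {j}.
               b *\<^sub>R (kron (Eunit id e j j') (Eunit id e j' j) + kron (Eunit id e j j) (Eunit id e j' j'))
               + c *\<^sub>R kron (Eunit id e j j') (Eunit id e j j'))))
   \<and>
   (\<forall>(M :: (complex^'n^'n) measure) (P :: complex^'n^'n) (P1 :: complex^'n^'n) (e :: 'n \<Rightarrow> complex^'n).
      haar_prob cnj M \<and> orth_proj cnj P \<and> rank P = l \<and> 1 \<le> l \<and>
      orth_proj cnj P1 \<and> rank P1 = 1 \<and> orthonormal_family cnj e \<longrightarrow>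
      (let m = CARD('n); a = (dF_complex m + (real m - 1)^2) / ((real m)^2 * dF_complex m);
           b = a / 2; c = 0 in
        coh2 cnj M P = (real l - real l * (real l - 1) / (real m - 1)) *\<^sub>R coh2 cnj M P1
                      + (real l * (real l - 1) / (real m * (real m - 1))) *\<^sub>R kron (mat 1) (mat 1)
      \<and> coh2 cnj M P1 = a *\<^sub>R (\<Sum>j\<in>UNIV. kron (Eunit cnj e j j) (Eunit cnj e j j))
          + (\<Sum>j\<in>UNIV. \<Sum>j'\<in>UNIV - {j}.
               b *\<^sub>R (kron (Eunit cnj e j j') (Eunit cnj e j' j) + kron (Eunit cnj e j j) (Eunit cnj e j' j'))
               + c *\<^sub>R kron (Eunit cnj e j j') (Eunit cnj e j j'))))"
  unfolding Let_def
  by (rule conjI; intro allI impI; elim conjE;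
      rule real_conj.coherence_tensor_formulas[OF m2 real_conj_index dF_real_coeff[OF m2]]
        complex_conj.coherence_tensor_formulas[OF m2 complex_conj_index dF_complex_coeff[OF m2]];
      simp)

end
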